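(* Let $E$ be a real finite-dimensional inner product space with inner product $(a,b)\mapsto (ab)$ and norm $|\cdot|$, and let $v:\mathbb{R}\to\mathbb{R}$ be an odd homeomorphism ($v(-\alpha)=-v(\alpha)$). For $a\neq b$ put $e=(a-b)/|a-b|$ and $v_{ab}:E\to E$, $v_{ab}(c)=c+(v((ce))-(ce))e$. Then $v_{ab}$ is a bijection with $v_{ab}^{-1}(c)=c+(v^{-1}((ce))-(ce))e$, and the map $f:E\times E\times[0,1]\to E$ given by $f(a,b,\gamma)=v_{ab}^{-1}\big((1-\gamma)v_{ab}(a)+\gamma v_{ab}(b)\big)$ for $a\ne b$ and $f(a,a,\gamma)=a$ is a continuous solution of the geodesic functional equations (with $D=E\times E$). Moreover, for all $a,b,\gamma$, $|a-f(a,b,\gamma)|+|f(a,b,\gamma)-b|=|a-b|$, so $f(a,b,\gamma)$ lies on the segment joining $a$ and $b$; in particular $f(B\times B\times[0,1])=B$ for every open ball $B\subset E$.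
   Context: For a topological manifold $M$, a solution of the geodesic functional equations is a continuous map $f:D\times[0,1]\to M$, with $D\subset M\times M$ open containing the diagonal, such that for all $(a,b)\in D$ and $\alpha,\beta,\gamma\in[0,1]$: $f(a,b,0)=a$, $f(a,b,1)=b$, $(f(a,b,\alpha),f(a,b,\beta))\in D$, and $f(a,b,(1-\gamma)\alpha+\gamma\beta)=f(f(a,b,\alpha),f(a,b,\beta),\gamma)$. *)

theory Defs
  imports "HOL-Analysis.Analysis"
begin

definition geodesic_solution :: "('a::topological_space \<times> 'a) set \<Rightarrow> ('a \<Rightarrow> 'a \<Rightarrow> real \<Rightarrow> 'a) \<Rightarrow> bool" where
  "geodesic_solution D f \<longleftrightarrow>
     open D \<and> (\<forall>a. (a, a) \<in> D) \<and>
     continuous_on (D \<times> {0..1}) (\<lambda>((a, b), t). f a b t) \<and>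
     (\<forall>a b. (a, b) \<in> D \<longrightarrow>
        f a b 0 = a \<and> f a b 1 = b \<and>
        (\<forall>\<alpha>\<in>{0..1}. \<forall>\<beta>\<in>{0..1}. \<forall>\<gamma>\<in>{0..1}.
           (f a b \<alpha>, f a b \<beta>) \<in> D \<and>
           f a b ((1 - \<gamma>) * \<alpha> + \<gamma> * \<beta>) = f (f a b \<alpha>) (f a b \<beta>) \<gamma>))"

definition unit_dir :: "'a::real_normed_vector \<Rightarrow> 'a \<Rightarrow> 'a" where
  "unit_dir a b = (1 / norm (a - b)) *\<^sub>R (a - b)"

definition vab :: "(real \<Rightarrow> real) \<Rightarrow> 'a::real_inner \<Rightarrow> 'a \<Rightarrow> 'a \<Rightarrow> 'a" where
  "vab v a b c = c + (v (c \<bullet> unit_dir a b) - c \<bullet> unit_dir a b) *\<^sub>R unit_dir a b"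

definition geo_f :: "(real \<Rightarrow> real) \<Rightarrow> 'a::real_inner \<Rightarrow> 'a \<Rightarrow> real \<Rightarrow> 'a" where
  "geo_f v a b \<gamma> =
     (if a = b then a
      else inv (vab v a b) ((1 - \<gamma>) *\<^sub>R vab v a b a + \<gamma> *\<^sub>R vab v a b b))"

end

theory Submission
  imports Defs
begin

text \<open>Let u be the unit direction of a - b. The map v_ab changes only the u-coordinate of a point,
  applying v to it; so f(a, b, -) runs along the line through a and b, and in the u-coordinate it is
  \<gamma> \<mapsto> w((1 - \<gamma>) v(s) + \<gamma> v(t)), where w is the inverse of v and s, t are the coordinates
  of a, b.
  Affine interpolation transported by v is compatible with affine reparametrisation, which gives the
  functional equation; oddness of v makes the formula independent of the orientation of u, which
  matters because the direction from f(a, b, \<alpha>) to f(a, b, \<beta>) may be -u. By the intermediate value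
  theorem the coordinate stays between s and t, so f(a, b, \<gamma>) lies on the segment [a, b]; this gives
  the distance identity, the ball property, and continuity on the diagonal.\<close>

text \<open>For u \<bullet> u = 1, the point of the line through p in direction u with u-coordinate s.\<close>
definition line_point :: "'a::real_inner \<Rightarrow> 'a \<Rightarrow> real \<Rightarrow> 'a" where
  "line_point p u s = p + (s - p \<bullet> u) *\<^sub>R u"

definition axis_map :: "(real \<Rightarrow> real) \<Rightarrow> 'a::real_inner \<Rightarrow> 'a \<Rightarrow> 'a" where
  "axis_map g u c = line_point c u (g (c \<bullet> u))"

lemma inner_line_point: "u \<bullet> u = 1 \<Longrightarrow> line_point p u s \<bullet> u = s"
  by (simp add: line_point_def inner_simps)

lemma line_point_inner_self [simp]: "line_point p u (p \<bullet> u) = p"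
  by (simp add: line_point_def)

lemma line_point_diff: "line_point p u s - line_point p u t = (s - t) *\<^sub>R u"
  by (simp add: line_point_def algebra_simps)

lemma line_point_uminus: "line_point p (- u) (- s) = line_point p u s"
  by (simp add: line_point_def algebra_simps)

lemma line_point_convex_comb:
  "(1 - \<gamma>) *\<^sub>R line_point p u s + \<gamma> *\<^sub>R line_point p u t = line_point p u ((1 - \<gamma>) * s + \<gamma> * t)"
  by (simp add: line_point_def algebra_simps)

lemma line_point_in_closed_segment:
  assumes "x \<in> closed_segment s t"
  shows "line_point p u x \<in> closed_segment (line_point p u s) (line_point p u t)"
proof -
  obtain \<theta> where "0 \<le> \<theta>" "\<theta> \<le> 1" "x = (1 - \<theta>) * s + \<theta> * t"
    using assms by (auto simp: in_segment)
  then show ?thesis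
    by (auto simp: in_segment line_point_convex_comb)
qed

lemma line_point_rebase: "u \<bullet> u = 1 \<Longrightarrow> line_point (line_point p u t) u s = line_point p u s"
  by (simp add: line_point_def inner_line_point algebra_simps)

lemma axis_map_line_point: "u \<bullet> u = 1 \<Longrightarrow> axis_map g u (line_point p u s) = line_point p u (g s)"
  by (simp add: axis_map_def inner_line_point line_point_rebase)

lemma axis_map_comp:
  assumes "u \<bullet> u = 1"
  shows "axis_map g u \<circ> axis_map h u = axis_map (g \<circ> h) u"
proof
  fix c
  show "(axis_map g u \<circ> axis_map h u) c = axis_map (g \<circ> h) u c"
    using axis_map_line_point[OF assms] by (simp add: axis_map_def[of h] axis_map_def[of "g \<circ> h"])
qed

lemma axis_map_id: "axis_map id u = id"
  by (simp add: fun_eq_iff axis_map_def)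

lemma
  assumes "\<And>x. w (v x) = x" "\<And>y. v (w y) = y" and "u \<bullet> u = 1"
  shows bij_axis_map: "bij (axis_map v u)"
    and inv_axis_map: "inv (axis_map v u) = axis_map w u"
proof -
  have "w \<circ> v = id" "v \<circ> w = id"
    using assms(1,2) by (simp_all add: fun_eq_iff)
  then have "axis_map w u \<circ> axis_map v u = id" "axis_map v u \<circ> axis_map w u = id"
    using assms(3) by (simp_all add: axis_map_comp axis_map_id)
  then show "bij (axis_map v u)" "inv (axis_map v u) = axis_map w u"
    by (auto intro: o_bij inv_unique_comp)
qed

lemma vab_eq_axis_map: "vab v a b = axis_map v (unit_dir a b)"
  by (simp add: fun_eq_iff vab_def axis_map_def line_point_def)

lemma inner_unit_dir_self: "a \<noteq> b \<Longrightarrow> unit_dir a b \<bullet> unit_dir a b = 1"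
  by (simp add: unit_dir_def power2_eq_square[symmetric] dot_square_norm)

lemma inner_unit_dir_diff: "(a - b) \<bullet> unit_dir a b = norm (a - b)"
  by (simp add: unit_dir_def dot_square_norm power2_eq_square)

lemma line_point_unit_dir: "line_point b (unit_dir a b) (a \<bullet> unit_dir a b) = a"
proof -
  have "((a - b) \<bullet> unit_dir a b) *\<^sub>R unit_dir a b = a - b"
    unfolding inner_unit_dir_diff by (cases "a = b") (simp_all add: unit_dir_def)
  then show ?thesis
    by (simp add: line_point_def inner_diff_left)
qed

lemma unit_dir_line_point:
  assumes "u \<bullet> u = 1" "t < s"
  shows "unit_dir (line_point p u s) (line_point p u t) = u"
proof -
  have "norm u = 1" using assms(1) by (simp add: norm_eq_sqrt_inner)
  then show ?thesis using assms(2) by (simp add: unit_dir_def line_point_diff)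
qed

lemma geo_f_line_point_of_less:
  assumes "\<And>x. w (v x) = x" "\<And>y. v (w y) = y" and u: "u \<bullet> u = 1" and "t < s"
  shows "geo_f v (line_point p u s) (line_point p u t) \<gamma>
           = line_point p u (w ((1 - \<gamma>) * v s + \<gamma> * v t))"
proof -
  have "u \<noteq> 0" using u by auto
  then have "line_point p u s - line_point p u t \<noteq> 0"
    using \<open>t < s\<close> by (simp add: line_point_diff)
  then show ?thesis
    using assms by (simp add: geo_f_def vab_eq_axis_map unit_dir_line_point inv_axis_map[OF assms(1-3)]
        axis_map_line_point line_point_convex_comb)
qed

lemma geo_f_line_point:
  assumes vw: "\<And>x. w (v x) = x" "\<And>y. v (w y) = y" and odd: "\<And>x. v (- x) = - v x"
    and u: "u \<bullet> u = 1"
  shows "geo_f v (line_point p u s) (line_point p u t) \<gamma>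
           = line_point p u (w ((1 - \<gamma>) * v s + \<gamma> * v t))"
proof (cases rule: linorder_cases[of t s])
  case less
  then show ?thesis using geo_f_line_point_of_less[OF vw u] by blast
next
  case equal
  then show ?thesis by (simp add: geo_f_def vw algebra_simps)
next
  case greater
  have w_odd: "w (- y) = - w y" for y
    by (metis vw odd)
  have "(- u) \<bullet> (- u) = 1" using u by simp
  from geo_f_line_point_of_less[OF vw this, of "- t" "- s" p \<gamma>] greater
  have "geo_f v (line_point p (- u) (- s)) (line_point p (- u) (- t)) \<gamma>
          = line_point p (- u) (w ((1 - \<gamma>) * v (- s) + \<gamma> * v (- t)))"
    by simp
  also have "(1 - \<gamma>) * v (- s) + \<gamma> * v (- t) = - ((1 - \<gamma>) * v s + \<gamma> * v t)"
    by (simp add: odd)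
  finally show ?thesis unfolding w_odd line_point_uminus .
qed

lemma geo_f_unit_dir:
  assumes "\<And>x. w (v x) = x" "\<And>y. v (w y) = y" and "a \<noteq> b"
  shows "geo_f v a b \<gamma> = line_point b (unit_dir a b)
           (w ((1 - \<gamma>) * v (a \<bullet> unit_dir a b) + \<gamma> * v (b \<bullet> unit_dir a b)))"
proof -
  have "0 < norm (a - b)" using \<open>a \<noteq> b\<close> by simp
  then have "b \<bullet> unit_dir a b < a \<bullet> unit_dir a b"
    using inner_unit_dir_diff[of a b] unfolding inner_diff_left by linarith
  from geo_f_line_point_of_less[OF assms(1,2) inner_unit_dir_self[OF \<open>a \<noteq> b\<close>] this, where p = b]
  show ?thesis by (simp add: line_point_unit_dir)
qed

lemma geo_f_0:
  assumes "\<And>x. w (v x) = x" "\<And>y. v (w y) = y"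
  shows "geo_f v a b 0 = a"
  by (cases "a = b") (simp add: geo_f_def, simp add: geo_f_unit_dir[OF assms] assms line_point_unit_dir)

lemma geo_f_1:
  assumes "\<And>x. w (v x) = x" "\<And>y. v (w y) = y"
  shows "geo_f v a b 1 = b"
  by (cases "a = b") (simp add: geo_f_def, simp add: geo_f_unit_dir[OF assms] assms)

lemma left_inverse_convex_comb_in_segment:
  fixes v w :: "real \<Rightarrow> real"
  assumes "continuous_on UNIV v" "\<And>x. w (v x) = x" and "0 \<le> \<gamma>" "\<gamma> \<le> 1"
  shows "w ((1 - \<gamma>) * v s + \<gamma> * v t) \<in> closed_segment s t"
proof -
  have "(1 - \<gamma>) * v s + \<gamma> * v t \<in> closed_segment (v s) (v t)"
    using assms(3,4) by (auto simp: in_segment)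
  then obtain x where "x \<in> closed_segment s t" "v x = (1 - \<gamma>) * v s + \<gamma> * v t"
    using IVT'_closed_segment_real continuous_on_subset[OF assms(1)] by blast
  then show ?thesis using assms(2) by metis
qed

lemma geo_f_in_closed_segment:
  assumes hom: "homeomorphism UNIV UNIV v w" and "0 \<le> \<gamma>" "\<gamma> \<le> 1"
  shows "geo_f v a b \<gamma> \<in> closed_segment a b"
proof (cases "a = b")
  case False
  have vw: "\<And>x. w (v x) = x" "\<And>y. v (w y) = y" and cont: "continuous_on UNIV v"
    using hom by (simp_all add: homeomorphism_def)
  from left_inverse_convex_comb_in_segment[OF cont vw(1) assms(2,3)]
  have "geo_f v a b \<gamma> \<in> closed_segment (line_point b (unit_dir a b) (a \<bullet> unit_dir a b))
                                  (line_point b (unit_dir a b) (b \<bullet> unit_dir a b))"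
    unfolding geo_f_unit_dir[OF vw False] by (rule line_point_in_closed_segment)
  then show ?thesis by (simp add: line_point_unit_dir)
qed (simp add: geo_f_def)

lemma geo_f_affine_reparam:
  assumes vw: "\<And>x. w (v x) = x" "\<And>y. v (w y) = y" and odd: "\<And>x. v (- x) = - v x"
  shows "geo_f v a b ((1 - \<gamma>) * \<alpha> + \<gamma> * \<beta>) = geo_f v (geo_f v a b \<alpha>) (geo_f v a b \<beta>) \<gamma>"
proof (cases "a = b")
  case False
  define u where "u = unit_dir a b"
  define m where "m x = (1 - x) * v (a \<bullet> u) + x * v (b \<bullet> u)" for x
  have u: "u \<bullet> u = 1" using inner_unit_dir_self[OF False] by (simp add: u_def)
  have line: "geo_f v a b x = line_point b u (w (m x))" for x
    using geo_f_unit_dir[OF vw False] by (simp add: u_def m_def)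
  have "geo_f v (geo_f v a b \<alpha>) (geo_f v a b \<beta>) \<gamma>
          = line_point b u (w ((1 - \<gamma>) * m \<alpha> + \<gamma> * m \<beta>))"
    unfolding line geo_f_line_point[OF vw odd u] vw(2) ..
  also have "(1 - \<gamma>) * m \<alpha> + \<gamma> * m \<beta> = m ((1 - \<gamma>) * \<alpha> + \<gamma> * \<beta>)"
    by (simp add: m_def algebra_simps)
  finally show ?thesis by (simp add: line)
qed (simp add: geo_f_def)

lemma geo_f_image_convex:
  assumes "homeomorphism UNIV UNIV v w" and "convex S"
  shows "(\<lambda>(a, b, \<gamma>). geo_f v a b \<gamma>) ` (S \<times> S \<times> {0..1}) = S"
proof
  show "(\<lambda>(a, b, \<gamma>). geo_f v a b \<gamma>) ` (S \<times> S \<times> {0..1}) \<subseteq> S"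
    using geo_f_in_closed_segment[OF assms(1)] closed_segment_subset[OF _ _ assms(2)] by force
  show "S \<subseteq> (\<lambda>(a, b, \<gamma>). geo_f v a b \<gamma>) ` (S \<times> S \<times> {0..1})"
    by (force simp: geo_f_def image_iff)
qed

lemma continuous_on_geo_f_off_diagonal:
  assumes hom: "homeomorphism UNIV UNIV v w"
  shows "continuous_on {((a, b), \<gamma>). a \<noteq> b} (\<lambda>((a::'a::real_inner, b), \<gamma>). geo_f v a b \<gamma>)"
proof -
  have vw: "\<And>x. w (v x) = x" "\<And>y. v (w y) = y"
    and cont: "continuous_on UNIV v" "continuous_on UNIV w"
    using hom by (simp_all add: homeomorphism_def)
  have "continuous_on {((a, b), \<gamma>). a \<noteq> b} (\<lambda>((a::'a, b), \<gamma>). line_point b (unit_dir a b)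
          (w ((1 - \<gamma>) * v (a \<bullet> unit_dir a b) + \<gamma> * v (b \<bullet> unit_dir a b))))"
    unfolding line_point_def unit_dir_def case_prod_beta
    by (intro continuous_intros continuous_on_compose2[OF cont(2) _ subset_UNIV]
        continuous_on_compose2[OF cont(1) _ subset_UNIV]) auto
  then show ?thesis
    by (rule continuous_on_eq) (auto simp: geo_f_unit_dir[OF vw])
qed

lemma continuous_geo_f_diagonal:
  assumes hom: "homeomorphism UNIV UNIV v w"
  shows "continuous (at ((c, c), t) within UNIV \<times> {0..1}) (\<lambda>((a::'a::real_inner, b), \<gamma>). geo_f v a b \<gamma>)"
proof -
  have "geo_f v a b \<gamma> \<in> ball c e"
    if "dist ((a, b), \<gamma>) ((c, c), t) < e" "0 \<le> \<gamma>" "\<gamma> \<le> 1" for a b \<gamma> e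
  proof -
    have "dist (a, b) (c, c) < e"
      using dist_fst_le[of "((a, b), \<gamma>)" "((c, c), t)"] that(1) by simp
    then have "a \<in> ball c e" "b \<in> ball c e"
      using dist_fst_le[of "(a, b)" "(c, c)"] dist_snd_le[of "(a, b)" "(c, c)"]
      by (simp_all add: dist_commute)
    then show ?thesis
      using geo_f_in_closed_segment[OF hom that(2,3)] closed_segment_subset[OF _ _ convex_ball] by blast
  qed
  then show ?thesis
    unfolding continuous_within_eps_delta by (fastforce simp: geo_f_def dist_commute)
qed

lemma continuous_on_geo_f:
  assumes hom: "homeomorphism UNIV UNIV v w"
  shows "continuous_on (UNIV \<times> {0..1}) (\<lambda>((a::'a::real_inner, b), \<gamma>). geo_f v a b \<gamma>)"
  unfolding continuous_on_eq_continuous_within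
proof
  fix x :: "('a \<times> 'a) \<times> real"
  obtain a b \<gamma> where x: "x = ((a, b), \<gamma>)" by (metis prod.collapse)
  show "continuous (at x within UNIV \<times> {0..1}) (\<lambda>((a, b), \<gamma>). geo_f v a b \<gamma>)"
  proof (cases "a = b")
    case True
    then show ?thesis using continuous_geo_f_diagonal[OF hom] by (simp add: x)
  next
    case False
    have "open {x :: ('a \<times> 'a) \<times> real. fst (fst x) \<noteq> snd (fst x)}"
      by (intro open_Collect_neq continuous_intros)
    then have "open {((a::'a, b), \<gamma>::real). a \<noteq> b}"
      by (simp add: case_prod_beta')
    from continuous_on_eq_continuous_at[OF this, THEN iffD1, OF continuous_on_geo_f_off_diagonal[OF hom]]
    have "isCont (\<lambda>((a, b), \<gamma>). geo_f v a b \<gamma>) x"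
      using False by (simp add: x)
    then show ?thesis by (rule continuous_at_imp_continuous_within)
  qed
qed

theorem mainTheorem8:
  fixes v :: "real \<Rightarrow> real"
  assumes homeo: "\<exists>w. homeomorphism UNIV UNIV v w"
    and odd: "\<And>x. v (- x) = - v x"
  shows "(\<forall>a b::'a::euclidean_space. a \<noteq> b \<longrightarrow>
            bij (vab v a b) \<and>
            inv (vab v a b) = (\<lambda>c. c + (inv v (c \<bullet> unit_dir a b) - c \<bullet> unit_dir a b) *\<^sub>R unit_dir a b))
       \<and> geodesic_solution (UNIV :: ('a \<times> 'a) set) (geo_f v)
       \<and> (\<forall>a b::'a. \<forall>\<gamma>\<in>{0..1}. dist a (geo_f v a b \<gamma>) + dist (geo_f v a b \<gamma>) b = dist a b)
       \<and> (\<forall>(x::'a) r. (\<lambda>(a, b, \<gamma>). geo_f v a b \<gamma>) ` (ball x r \<times> ball x r \<times> {0..1}) = ball x r)"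
proof -
  obtain w where hom: "homeomorphism UNIV UNIV v w" using homeo by blast
  have vw: "\<And>x. w (v x) = x" "\<And>y. v (w y) = y"
    using hom by (simp_all add: homeomorphism_def)
  have inv_v: "inv v = w"
    by (rule inv_unique_comp) (simp_all add: fun_eq_iff vw)
  have "bij (vab v a b) \<and>
      inv (vab v a b) = (\<lambda>c. c + (inv v (c \<bullet> unit_dir a b) - c \<bullet> unit_dir a b) *\<^sub>R unit_dir a b)"
    if "a \<noteq> b" for a b :: 'a
    using bij_axis_map[OF vw inner_unit_dir_self[OF that]] inv_axis_map[OF vw inner_unit_dir_self[OF that]]
    by (simp add: vab_eq_axis_map inv_v fun_eq_iff axis_map_def line_point_def)
  moreover have "geodesic_solution (UNIV :: ('a \<times> 'a) set) (geo_f v)"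
    using continuous_on_geo_f[OF hom]
    by (simp add: geodesic_solution_def geo_f_0[OF vw] geo_f_1[OF vw] geo_f_affine_reparam[OF vw odd])
  moreover have "dist a (geo_f v a b \<gamma>) + dist (geo_f v a b \<gamma>) b = dist a b"
    if "\<gamma> \<in> {0..1}" for a b :: 'a and \<gamma>
    using geo_f_in_closed_segment[OF hom, of \<gamma> a b] that between[of a b "geo_f v a b \<gamma>"]
    by (simp add: between_mem_segment)
  ultimately show ?thesis
    using geo_f_image_convex[OF hom convex_ball] by blast
qed

end
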